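(* Let $F>1$ and $s>0$ be constants. Consider the self-adjusting $(1,\lambda)$ EA (defined in the context) with update strength $F$ and success rate $s$, using either standard bit mutation with mutation probability $p\in O(1/n)\cap n^{-O(1)}$ or the heavy-tailed mutation operator with a constant $\beta>1$, on an everywhere hard function $f$ with $d+1=n^{o(\log n)}$ function values. Let $\gamma>1$ be a constant with $p_x^-\le\gamma^{-1}$ for all non-optimal $x$, let $\lambda_1:=4\max\left(\log_\gamma(2d(s+1)),\log_\gamma(n\log n)\right)$, and define the potential \[ g(X_t)=f(x_t)-\frac{s}{s+1}\log_F\left(\max\left(\frac{F^{1/s}}{p_{\min}\lambda_t},1\right)\right). \] Then for $n$ large enough, for every generation $t$ with $f(x_t)<d$ and $\lambda_t\ge\lambda_1$, \[ E[g(X_{t+1})-g(X_t)\mid X_t]\ge\frac{1}{2(s+1)}. \] This also holds when every fitness improvement is counted as an increase of the fitness by exactly $1$.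
   Context: Search space $\{0,1\}^n$; asymptotics with respect to $n\to\infty$. W.l.o.g. $f$ takes values in $\{0,\dots,d\}$ with global optima at value $d$. Self-adjusting $(1,\lambda)$ EA: state $X_t=(x_t,\lambda_t)$ with current search point $x_t$ and real-valued offspring population size $\lambda_t$ (rounded to a nearest integer when needed). Each generation creates $\lambda_t$ offspring independently by mutating $x_t$, picks an offspring $y$ of maximum fitness (ties uniformly at random), sets $x_{t+1}=y$ in any case, and sets $\lambda_{t+1}=\max\{1,\lambda_t/F\}$ if $f(y)>f(x_t)$ and $\lambda_{t+1}=F^{1/s}\lambda_t$ otherwise. Standard bit mutation with probability $p$ flips each bit independently with probability $p$. Heavy-tailed mutation with $\beta>1$ draws $\chi\in\{1,\dots,n/2\}$ with $\Pr[\chi=i]=i^{-\beta}/\sum_{j=1}^{n/2}j^{-\beta}$ and then does standard bit mutation with probability $\chi/n$. For these operators such a constant $\gamma$ exists. $p_x^+$ (resp. $p_x^-$) is the probability that a single offspring of $x$ has strictly larger (resp. smaller) fitness than $x$; $p_{\min}:=\min\{p_x^+ : f(x)<d\}$, $p_{\max}:=\max\{p_x^+ : f(x)<d\}$. $f$ is everywhere hard if $p_{\max}=O(n^{-\varepsilon})$ for some constant $0<\varepsilon<1$. *)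

theory Defs
  imports "HOL-Probability.Probability" "HOL-Library.Landau_Symbols"
begin

text \<open>Search points of {0,1}^n are boolean lists of length n.\<close>

fun sbm :: "real \<Rightarrow> bool list \<Rightarrow> bool list pmf" where
  "sbm q [] = return_pmf []"
| "sbm q (b # bs) = do { c \<leftarrow> bernoulli_pmf q; r \<leftarrow> sbm q bs;
                         return_pmf ((if c then \<not> b else b) # r) }"

definition power_law :: "real \<Rightarrow> nat \<Rightarrow> nat pmf" where
  "power_law \<beta> n = embed_pmf (\<lambda>i. if i \<in> {1..n div 2}
       then real i powr (-\<beta>) / (\<Sum>j\<in>{1..n div 2}. real j powr (-\<beta>)) else 0)"

definition heavy_tailed :: "real \<Rightarrow> bool list \<Rightarrow> bool list pmf" where
  "heavy_tailed \<beta> x = do { k \<leftarrow> power_law \<beta> (length x); sbm (real k / real (length x)) x }"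

definition p_plus :: "(bool list \<Rightarrow> bool list pmf) \<Rightarrow> (bool list \<Rightarrow> nat) \<Rightarrow> bool list \<Rightarrow> real" where
  "p_plus mut f x = measure_pmf.prob (mut x) {y. f y > f x}"

definition p_minus :: "(bool list \<Rightarrow> bool list pmf) \<Rightarrow> (bool list \<Rightarrow> nat) \<Rightarrow> bool list \<Rightarrow> real" where
  "p_minus mut f x = measure_pmf.prob (mut x) {y. f y < f x}"

definition p_min :: "(bool list \<Rightarrow> bool list pmf) \<Rightarrow> (bool list \<Rightarrow> nat) \<Rightarrow> nat \<Rightarrow> nat \<Rightarrow> real" where
  "p_min mut f d n = Min {p_plus mut f x | x. length x = n \<and> f x < d}"

definition nof :: "real \<Rightarrow> nat" where
  "nof l = nat (round l)"

definition ea_step :: "real \<Rightarrow> real \<Rightarrow> (bool list \<Rightarrow> bool list pmf) \<Rightarrow> (bool list \<Rightarrow> nat)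
    \<Rightarrow> bool list \<times> real \<Rightarrow> (bool list \<times> real) pmf" where
  "ea_step F s mut f X = (case X of (x, l) \<Rightarrow> do {
      ys \<leftarrow> replicate_pmf (nof l) (mut x);
      i \<leftarrow> pmf_of_set {i. i < nof l \<and> f (ys ! i) = Max ((\<lambda>j. f (ys ! j)) ` {..<nof l})};
      return_pmf (ys ! i, if f (ys ! i) > f x then max 1 (l / F) else F powr (1 / s) * l) })"

definition lam_pot :: "real \<Rightarrow> real \<Rightarrow> real \<Rightarrow> real \<Rightarrow> real" where
  "lam_pot F s pm l = s / (s + 1) * log F (max (F powr (1 / s) / (pm * l)) 1)"

definition pot :: "real \<Rightarrow> real \<Rightarrow> (bool list \<Rightarrow> nat) \<Rightarrow> real \<Rightarrow> bool list \<times> real \<Rightarrow> real" where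
  "pot F s f pm X = (case X of (x, l) \<Rightarrow> real (f x) - lam_pot F s pm l)"

definition pot_change_unit :: "real \<Rightarrow> real \<Rightarrow> (bool list \<Rightarrow> nat) \<Rightarrow> real
    \<Rightarrow> bool list \<times> real \<Rightarrow> bool list \<times> real \<Rightarrow> real" where
  "pot_change_unit F s f pm X X' = (case X of (x, l) \<Rightarrow> case X' of (y, l') \<Rightarrow>
      (if f y > f x then 1 else real (f y) - real (f x)) - (lam_pot F s pm l' - lam_pot F s pm l))"

end

theory Submission
  imports Defs "HOL-Real_Asymp.Real_Asymp"
begin

(*
  Fix a non-optimal x and \<lambda> \<ge> \<lambda>_1, and let k be \<lambda> rounded. If some offspring is better
  (probability 1 - (1 - p_x^+)^k), the fitness grows by at least 1 while \<lambda> shrinks by the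
  factor F, which costs at most s/(s+1) in the \<lambda>-part of the potential: a net gain of at least
  1/(s+1). Otherwise \<lambda> grows by the factor F^(1/s). If p_min \<lambda> \<le> 1 this gains exactly
  1/(s+1) in the potential; if p_min \<lambda> > 1 it gains nothing, but it only happens with
  probability (1 - p_x^+)^k \<le> exp (-19/20) < 5/12. Finally, all offspring are worse with
  probability at most \<gamma>^(-k), and then at most d fitness is lost; the choice of \<lambda>_1 makes this
  contribution at most 1/(18(s+1)).
*)

section \<open>Mutation operators\<close>

lemma length_sbm: "ys \<in> set_pmf (sbm q xs) \<Longrightarrow> length ys = length xs"
  by (induction xs arbitrary: ys) auto

lemma set_pmf_sbm:
  assumes "0 < q" "q < 1"
  shows "set_pmf (sbm q xs) = {ys. length ys = length xs}"
proof (induction xs)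
  case (Cons b bs)
  show ?case
  proof (intro equalityI subsetI)
    fix ys :: "bool list"
    assume "ys \<in> {ys. length ys = length (b # bs)}"
    then obtain c r where "ys = c # r" "length r = length bs"
      by (auto simp: length_Suc_conv)
    then show "ys \<in> set_pmf (sbm q (b # bs))"
      using assms Cons.IH by (auto intro!: bexI[of _ "c \<noteq> b"])
  qed (auto dest: length_sbm)
qed simp

lemma finite_bool_lists_length_eq: "finite {xs :: bool list. length xs = n}"
  using finite_lists_length_eq[of "UNIV :: bool set" n] by simp

lemma one_in_set_pmf_power_law:
  assumes "2 \<le> n"
  shows "1 \<in> set_pmf (power_law \<beta> n)"
proof -
  define Z where "Z = (\<Sum>j\<in>{1..n div 2}. real j powr (-\<beta>))"
  define w where "w = (\<lambda>i. if i \<in> {1..n div 2} then real i powr (-\<beta>) / Z else 0)"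
  have "Z > 0"
    using assms by (auto simp: Z_def intro!: sum_pos)
  then have w_nonneg: "\<And>i. 0 \<le> w i" and "w 1 \<noteq> 0"
    using assms by (auto simp: w_def)
  have "(\<integral>\<^sup>+i. w i \<partial>count_space UNIV) = (\<Sum>i\<in>{1..n div 2}. ennreal (w i))"
    by (rule nn_integral_count_space') (auto simp: w_def)
  also have "\<dots> = ennreal (\<Sum>i\<in>{1..n div 2}. w i)"
    using w_nonneg by simp
  also have "(\<Sum>i\<in>{1..n div 2}. w i) = 1"
    using \<open>Z > 0\<close> by (simp add: w_def Z_def flip: sum_divide_distrib)
  finally have "(\<integral>\<^sup>+i. w i \<partial>count_space UNIV) = 1"
    by simp
  moreover have "power_law \<beta> n = embed_pmf w"
    unfolding power_law_def w_def Z_def ..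
  ultimately show ?thesis
    using set_embed_pmf[of w, OF w_nonneg] \<open>w 1 \<noteq> 0\<close> by simp
qed

lemma length_heavy_tailed: "ys \<in> set_pmf (heavy_tailed \<beta> xs) \<Longrightarrow> length ys = length xs"
  by (auto simp: heavy_tailed_def dest: length_sbm)

lemma set_pmf_heavy_tailed:
  assumes "2 \<le> length xs"
  shows "set_pmf (heavy_tailed \<beta> xs) = {ys. length ys = length xs}"
proof -
  have "set_pmf (sbm (1 / real (length xs)) xs) = {ys. length ys = length xs}"
    using assms by (intro set_pmf_sbm) (auto simp: divide_less_eq_1)
  then have "{ys. length ys = length xs} \<subseteq> set_pmf (heavy_tailed \<beta> xs)"
    using one_in_set_pmf_power_law[OF assms, of \<beta>] by (auto simp: heavy_tailed_def)
  then show ?thesis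
    using length_heavy_tailed by blast
qed

lemma eventually_in_open_unit_interval:
  fixes p :: "nat \<Rightarrow> real"
  assumes "p \<in> O(\<lambda>n. 1 / real n)" and "\<forall>\<^sub>F n in sequentially. p n \<ge> real n powr (- C)"
  shows "\<forall>\<^sub>F n in sequentially. 0 < p n \<and> p n < 1"
proof -
  have "(\<lambda>n. 1 / real n) \<in> o(\<lambda>_. 1)"
    by real_asymp
  with assms(1) have "p \<in> o(\<lambda>_. 1)"
    by (rule landau_o.big_small_trans)
  then have "\<forall>\<^sub>F n in sequentially. norm (p n) \<le> 1/2 * norm (1::real)"
    by (rule landau_o.smallD) simp
  then show ?thesis
    using assms(2) eventually_gt_at_top[of 0]
  proof eventually_elim
    case (elim n)
    have "0 < real n powr (- C)"
      using elim(3) by simp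
    then have "0 < p n"
      using elim(2) by linarith
    moreover have "p n < 1"
      using elim(1) by (simp add: abs_le_iff)
    ultimately show ?case ..
  qed
qed

section \<open>One generation of the EA\<close>

lemma map_pmf_fitness_of_best_offspring:
  fixes g :: "'a \<Rightarrow> 'b :: linorder"
  assumes "ys \<noteq> []"
  shows "map_pmf (\<lambda>i. g (ys ! i))
           (pmf_of_set {i. i < length ys \<and> g (ys ! i) = Max ((\<lambda>j. g (ys ! j)) ` {..<length ys})})
         = return_pmf (Max (g ` set ys))"
proof -
  have image_eq: "(\<lambda>j. g (ys ! j)) ` {..<length ys} = g ` set ys"
    by (auto simp: set_conv_nth image_iff)
  define S where "S = {i. i < length ys \<and> g (ys ! i) = Max (g ` set ys)}"
  have "Max (g ` set ys) \<in> g ` set ys"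
    using assms by (intro Max_in) auto
  then have "S \<noteq> {}" "finite S"
    by (auto simp: S_def in_set_conv_nth)
  then have "map_pmf (\<lambda>i. g (ys ! i)) (pmf_of_set S) = map_pmf (\<lambda>_. Max (g ` set ys)) (pmf_of_set S)"
    by (intro map_pmf_cong) (auto simp: S_def)
  then show ?thesis
    by (simp add: image_eq flip: S_def)
qed

lemma ea_step_fitness_map:
  assumes "1 \<le> nof l"
  shows "map_pmf (\<lambda>(y, l'). (g y, l')) (ea_step F s mut g (x, l))
       = map_pmf (\<lambda>ys. (Max (g ` set ys),
                         if Max (g ` set ys) > g x then max 1 (l / F) else F powr (1 / s) * l))
           (replicate_pmf (nof l) (mut x))"
proof -
  define upd where "upd = (\<lambda>v. (v, if v > g x then max 1 (l / F) else F powr (1 / s) * l))"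
  have "map_pmf (\<lambda>(y, l'). (g y, l'))
          (pmf_of_set {i. i < nof l \<and> g (ys ! i) = Max ((\<lambda>j. g (ys ! j)) ` {..<nof l})}
             \<bind> (\<lambda>i. return_pmf (ys ! i, if g (ys ! i) > g x then max 1 (l / F) else F powr (1 / s) * l)))
        = return_pmf (upd (Max (g ` set ys)))"
    if "ys \<in> set_pmf (replicate_pmf (nof l) (mut x))" for ys
  proof -
    define P where "P = pmf_of_set {i. i < nof l \<and> g (ys ! i) = Max ((\<lambda>j. g (ys ! j)) ` {..<nof l})}"
    have "length ys = nof l" "ys \<noteq> []"
      using that assms by (auto simp: set_replicate_pmf)
    then have "map_pmf (\<lambda>i. g (ys ! i)) P = return_pmf (Max (g ` set ys))"
      using map_pmf_fitness_of_best_offspring[of ys g] by (simp add: P_def)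
    moreover have "map_pmf (\<lambda>(y, l'). (g y, l'))
          (P \<bind> (\<lambda>i. return_pmf (ys ! i, if g (ys ! i) > g x then max 1 (l / F) else F powr (1 / s) * l)))
        = map_pmf upd (map_pmf (\<lambda>i. g (ys ! i)) P)"
      by (simp add: upd_def map_pmf_def bind_assoc_pmf bind_return_pmf)
    ultimately show ?thesis
      by (simp add: P_def)
  qed
  then show ?thesis
    unfolding ea_step_def prod.case map_bind_pmf
    by (simp add: upd_def map_pmf_def cong: bind_pmf_cong)
qed

lemma prob_replicate_pmf_lists:
  "measure_pmf.prob (replicate_pmf k M) {ys. set ys \<subseteq> A} = measure_pmf.prob M A ^ k"
proof -
  have "emeasure (replicate_pmf k M) {ys. set ys \<subseteq> A} = emeasure M A ^ k"
  proof (induction k)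
    case (Suc k)
    have "emeasure (replicate_pmf (Suc k) M) {ys. set ys \<subseteq> A}
        = (\<integral>\<^sup>+y. emeasure (map_pmf ((#) y) (replicate_pmf k M)) {ys. set ys \<subseteq> A} \<partial>M)"
      by (simp add: map_pmf_def)
    also have "\<dots> = (\<integral>\<^sup>+y. emeasure M A ^ k * indicator A y \<partial>M)"
      using Suc.IH by (intro nn_integral_cong) (auto simp: vimage_def indicator_def)
    also have "\<dots> = emeasure M A ^ k * emeasure M A"
      by (subst nn_integral_cmult_indicator) auto
    finally show ?case
      by (simp add: mult.commute)
  qed simp
  then show ?thesis
    by (simp add: measure_pmf.emeasure_eq_measure ennreal_power)
qed

lemma measure_pmf_prob_UNIV_Diff:
  "measure_pmf.prob M (UNIV - A) = 1 - measure_pmf.prob M A"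
  using measure_pmf.prob_compl[of A M] by simp

lemma prob_replicate_pmf_some_better:
  fixes g :: "bool list \<Rightarrow> nat"
  shows "measure_pmf.prob (replicate_pmf k (mut x)) {ys. \<exists>y\<in>set ys. g y > g x}
    = 1 - (1 - p_plus mut g x) ^ k"
proof -
  have "{ys. \<exists>y\<in>set ys. g y > g x} = UNIV - {ys. set ys \<subseteq> {y. g y \<le> g x}}"
    by (auto simp: not_le)
  then have "measure_pmf.prob (replicate_pmf k (mut x)) {ys. \<exists>y\<in>set ys. g y > g x}
      = 1 - measure_pmf.prob (mut x) {y. g y \<le> g x} ^ k"
    by (simp add: measure_pmf_prob_UNIV_Diff prob_replicate_pmf_lists)
  moreover have "{y. g y \<le> g x} = UNIV - {y. g y > g x}"
    by (auto simp: not_less)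
  then have "measure_pmf.prob (mut x) {y. g y \<le> g x} = 1 - p_plus mut g x"
    by (simp add: p_plus_def measure_pmf_prob_UNIV_Diff)
  ultimately show ?thesis
    by simp
qed

lemma prob_replicate_pmf_all_worse:
  fixes g :: "bool list \<Rightarrow> nat"
  shows "measure_pmf.prob (replicate_pmf k (mut x)) {ys. \<forall>y\<in>set ys. g y < g x} = p_minus mut g x ^ k"
  using prob_replicate_pmf_lists[of k "mut x" "{y. g y < g x}"]
  by (simp add: p_minus_def subset_eq)

lemma expectation_ea_step:
  fixes h :: "nat \<Rightarrow> real \<Rightarrow> real"
  assumes "1 \<le> nof l"
  shows "measure_pmf.expectation (ea_step F s mut g (x, l)) (\<lambda>(y, l'). h (g y) l')
    = measure_pmf.expectation (replicate_pmf (nof l) (mut x))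
        (\<lambda>ys. h (Max (g ` set ys))
                 (if Max (g ` set ys) > g x then max 1 (l / F) else F powr (1 / s) * l))"
proof -
  have "measure_pmf.expectation (ea_step F s mut g (x, l)) (\<lambda>(y, l'). h (g y) l')
      = measure_pmf.expectation (map_pmf (\<lambda>(y, l'). (g y, l')) (ea_step F s mut g (x, l)))
          (\<lambda>(v, l'). h v l')"
    by (simp add: case_prod_beta')
  then show ?thesis
    by (simp add: ea_step_fitness_map[OF assms])
qed

lemma ea_step_expectation_ge:
  fixes g :: "bool list \<Rightarrow> nat" and \<theta> :: "nat \<Rightarrow> real" and L :: "real \<Rightarrow> real"
  assumes "1 \<le> nof l" and fin: "finite (set_pmf (mut x))"
    and better: "\<And>v. g x < v \<Longrightarrow> 1 \<le> \<theta> v"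
    and equal: "0 \<le> \<theta> (g x)"
    and worse: "\<And>v. v < g x \<Longrightarrow> - real (g x) \<le> \<theta> v"
  shows "(1 - (L (max 1 (l / F)) - L l)) * (1 - (1 - p_plus mut g x) ^ nof l)
       - (L (F powr (1 / s) * l) - L l) * (1 - p_plus mut g x) ^ nof l
       - real (g x) * p_minus mut g x ^ nof l
     \<le> measure_pmf.expectation (ea_step F s mut g (x, l)) (\<lambda>(y, l'). \<theta> (g y) - (L l' - L l))"
proof -
  define R where "R = replicate_pmf (nof l) (mut x)"
  define Ls where "Ls = L (max 1 (l / F)) - L l"
  define Lf where "Lf = L (F powr (1 / s) * l) - L l"
  define A where "A = {ys. \<exists>y\<in>set ys. g y > g x}"
  define B where "B = {ys. \<forall>y\<in>set ys. g y < g x}"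
  define gain where "gain = (\<lambda>ys. \<theta> (Max (g ` set ys))
      - (L (if Max (g ` set ys) > g x then max 1 (l / F) else F powr (1 / s) * l) - L l))"
  have "set_pmf R \<subseteq> {ys. set ys \<subseteq> set_pmf (mut x) \<and> length ys = nof l}"
    by (auto simp: R_def set_replicate_pmf)
  then have fin_R: "finite (set_pmf R)"
    using finite_lists_length_eq[OF fin] by (rule finite_subset)
  have "- Lf + (1 - Ls + Lf) * indicator A ys - real (g x) * indicator B ys \<le> gain ys"
    if "ys \<in> set_pmf R" for ys
  proof -
    have "ys \<noteq> []"
      using that \<open>1 \<le> nof l\<close> by (auto simp: R_def set_replicate_pmf)
    then have A_iff: "ys \<in> A \<longleftrightarrow> Max (g ` set ys) > g x"
      and B_iff: "ys \<in> B \<longleftrightarrow> Max (g ` set ys) < g x"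
      by (auto simp: A_def B_def Max_gr_iff)
    consider "Max (g ` set ys) > g x" | "Max (g ` set ys) = g x" | "Max (g ` set ys) < g x"
      by linarith
    then show ?thesis
      by cases (use A_iff B_iff better equal worse in \<open>auto simp: gain_def Ls_def Lf_def\<close>)
  qed
  then have "measure_pmf.expectation R
      (\<lambda>ys. - Lf + (1 - Ls + Lf) * indicator A ys - real (g x) * indicator B ys)
      \<le> measure_pmf.expectation R gain"
    using fin_R by (intro integral_mono_AE AE_pmfI integrable_measure_pmf_finite)
  moreover have "measure_pmf.expectation R
      (\<lambda>ys. - Lf + (1 - Ls + Lf) * indicator A ys - real (g x) * indicator B ys)
      = - Lf + (1 - Ls + Lf) * measure_pmf.prob R A - real (g x) * measure_pmf.prob R B"
    using fin_R by (simp add: integrable_measure_pmf_finite)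
  moreover have "measure_pmf.expectation (ea_step F s mut g (x, l)) (\<lambda>(y, l'). \<theta> (g y) - (L l' - L l))
      = measure_pmf.expectation R gain"
    unfolding R_def gain_def by (rule expectation_ea_step[OF \<open>1 \<le> nof l\<close>])
  ultimately show ?thesis
    by (simp add: R_def A_def B_def Ls_def Lf_def prob_replicate_pmf_some_better
        prob_replicate_pmf_all_worse algebra_simps)
qed

section \<open>The potential\<close>

lemma lam_pot_antimono:
  assumes "1 < F" "0 < s" "0 < pm" "0 < l" "l \<le> l'"
  shows "lam_pot F s pm l' \<le> lam_pot F s pm l"
proof -
  have "F powr (1 / s) / (pm * l') \<le> F powr (1 / s) / (pm * l)"
    using assms by (intro divide_left_mono) auto
  then have "log F (max (F powr (1 / s) / (pm * l')) 1) \<le> log F (max (F powr (1 / s) / (pm * l)) 1)"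
    using assms by (subst log_le_cancel_iff) auto
  then show ?thesis
    using assms unfolding lam_pot_def by (intro mult_left_mono) auto
qed

lemma lam_pot_shrink_le:
  assumes F: "1 < F" and "0 < s" "0 < pm" "0 < l"
  shows "lam_pot F s pm (max 1 (l / F)) - lam_pot F s pm l \<le> s / (s + 1)"
proof -
  define a where "a = F powr (1 / s)"
  define b where "b = a / (pm * l)"
  have "pm * (l / F) \<le> pm * max 1 (l / F)"
    using assms by (intro mult_left_mono) auto
  then have "a / (pm * max 1 (l / F)) \<le> a / (pm * (l / F))"
    using assms by (intro divide_left_mono) (auto simp: a_def)
  also have "\<dots> = F * b"
    using F by (simp add: b_def)
  also have "\<dots> \<le> F * max b 1"
    using F by (intro mult_left_mono) auto
  finally have "max (a / (pm * max 1 (l / F))) 1 \<le> F * max b 1"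
    using F mult_mono[of 1 F 1 "max b 1"] by simp
  then have "log F (max (a / (pm * max 1 (l / F))) 1) \<le> log F (F * max b 1)"
    using F by (subst log_le_cancel_iff) auto
  also have "\<dots> = 1 + log F (max b 1)"
    using F by (subst log_mult) auto
  finally have "s / (s + 1) * log F (max (a / (pm * max 1 (l / F))) 1)
      \<le> s / (s + 1) * (1 + log F (max b 1))"
    by (rule mult_left_mono) (use assms in simp)
  then show ?thesis
    unfolding lam_pot_def a_def[symmetric] b_def[symmetric] by (simp add: algebra_simps)
qed

lemma lam_pot_grow_eq:
  assumes F: "1 < F" and s: "0 < s" and "0 < pm" "0 < l" and small: "pm * l \<le> 1"
  shows "lam_pot F s pm (F powr (1 / s) * l) - lam_pot F s pm l = - 1 / (s + 1)"
proof -
  define a where "a = F powr (1 / s)"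
  have "1 \<le> a"
    using F s by (simp add: a_def ge_one_powr_ge_zero)
  have "0 < pm * l"
    using assms by simp
  then have "max (a / (pm * (a * l))) 1 = 1 / (pm * l)" "max (a / (pm * l)) 1 = a / (pm * l)"
    using \<open>1 \<le> a\<close> small by (auto simp: max_def field_simps)
  moreover have "log F (1 / (pm * l)) = - log F (pm * l)" "log F (a / (pm * l)) = 1 / s - log F (pm * l)"
    using \<open>0 < pm * l\<close> F \<open>1 \<le> a\<close> by (simp_all add: log_divide_pos a_def)
  ultimately have "lam_pot F s pm (a * l) - lam_pot F s pm l
      = s / (s + 1) * (- log F (pm * l)) - s / (s + 1) * (1 / s - log F (pm * l))"
    unfolding lam_pot_def a_def[symmetric] by simp
  also have "\<dots> = - (s / (s + 1) * (1 / s))"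
    by (simp add: algebra_simps)
  also have "\<dots> = - 1 / (s + 1)"
    using s by simp
  finally show ?thesis
    by (simp add: a_def)
qed

lemma lam_pot_grow_le:
  assumes "1 < F" "0 < s" "0 < pm" "0 < l"
  shows "lam_pot F s pm (F powr (1 / s) * l) - lam_pot F s pm l \<le> 0"
proof -
  have "l \<le> F powr (1 / s) * l"
    using assms by (simp add: ge_one_powr_ge_zero)
  then show ?thesis
    using lam_pot_antimono[OF assms] by simp
qed

lemma nof_ge:
  assumes "10 \<le> l"
  shows "19 / 20 * l \<le> real (nof l)"
proof -
  have "l - 1 / 2 \<le> of_int (round l)"
    by (rule of_int_round_ge)
  moreover from this have "real (nof l) = of_int (round l)"
    using assms by (simp add: nof_def)
  ultimately show ?thesis
    using assms by linarith
qed

section \<open>The drift bound\<close>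

lemma no_improvement_prob_le:
  assumes "0 < pm" "pm \<le> pp" "pp \<le> 1" "1 < pm * l" "10 \<le> l"
  shows "(1 - pp) ^ nof l \<le> 5 / 12"
proof -
  have "19 / 20 < pm * (19 / 20 * l)"
    using assms by simp
  also have "\<dots> \<le> pp * real (nof l)"
    using assms nof_ge[OF assms(5)] by (intro mult_mono) auto
  finally have "19 / 20 < pp * real (nof l)" .
  have "(1 - pp) ^ nof l \<le> exp (- pp) ^ nof l"
    using assms by (intro power_mono) (auto simp: exp_ge_add_one_self[of "- pp", simplified])
  also have "\<dots> = exp (- (pp * real (nof l)))"
    by (simp add: exp_of_nat_mult[symmetric] algebra_simps)
  also have "\<dots> \<le> exp (- (19 / 20))"
    using \<open>19 / 20 < pp * real (nof l)\<close> by simp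
  also have "\<dots> = 1 / exp (19 / 20)"
    by (simp add: exp_minus field_simps)
  also have "\<dots> \<le> 1 / (1 + 19 / 20 + (19 / 20)\<^sup>2 / 2)"
    using exp_lower_Taylor_quadratic[of "19 / 20 :: real"] by (intro divide_left_mono) (auto intro!: mult_pos_pos add_pos_nonneg)
  also have "\<dots> \<le> 5 / 12"
    by (simp add: power2_eq_square)
  finally show ?thesis .
qed

lemma drift_bound_arith:
  fixes u Q Ls Lf loss :: real
  assumes "0 < u" "0 \<le> Q" "Q \<le> 1" "u \<le> 1 - Ls"
    and "Lf = - u \<or> (Lf \<le> 0 \<and> Q \<le> 5 / 12)" and "loss \<le> u / 18"
  shows "u / 2 \<le> (1 - Ls) * (1 - Q) - Lf * Q - loss"
proof -
  have "u * (1 - Q) \<le> (1 - Ls) * (1 - Q)"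
    using assms by (intro mult_right_mono) auto
  moreover have "u / 2 + u / 18 \<le> u * (1 - Q) - Lf * Q"
    using assms(5)
  proof
    assume "Lf \<le> 0 \<and> Q \<le> 5 / 12"
    then have "Lf * Q \<le> 0" "u * Q \<le> u * (5 / 12)"
      using assms by (auto intro: mult_left_mono mult_nonpos_nonneg)
    moreover have "u * (1 - Q) = u - u * Q"
      by (simp add: algebra_simps)
    ultimately show ?thesis
      using \<open>0 < u\<close> by linarith
  qed (simp add: algebra_simps \<open>0 < u\<close>)
  ultimately show ?thesis
    using assms by linarith
qed

lemma fitness_loss_term_le:
  fixes \<gamma> s l q :: real and D v n k :: nat
  assumes \<gamma>: "1 < \<gamma>" and s: "0 < s" and D: "1 \<le> D" and v: "v \<le> D"
    and q: "0 \<le> q" "q \<le> 1 / \<gamma>"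
    and n: "9 \<le> real n * ln (real n)"
    and k: "l / 2 \<le> real k"
    and l: "4 * max (log \<gamma> (2 * real D * (s + 1))) (log \<gamma> (real n * ln (real n))) \<le> l"
  shows "real v * q ^ k \<le> 1 / (18 * (s + 1))"
proof -
  define A where "A = log \<gamma> (2 * real D * (s + 1))"
  define B where "B = log \<gamma> (real n * ln (real n))"
  have "q ^ k \<le> (1 / \<gamma>) ^ k"
    using q by (intro power_mono) auto
  also have "\<dots> = \<gamma> powr (- real k)"
    using \<gamma> by (simp add: powr_minus powr_realpow power_one_over inverse_eq_divide)
  also have "\<dots> \<le> \<gamma> powr (- (A + B))"
    using \<gamma> k l by (intro powr_mono) (auto simp: A_def B_def)
  also have "\<dots> = inverse (\<gamma> powr A) * inverse (\<gamma> powr B)"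
    by (simp only: powr_minus powr_add inverse_mult_distrib)
  also have "\<dots> = 1 / (2 * real D * (s + 1)) * (1 / (real n * ln (real n)))"
    using \<gamma> D s n by (simp add: A_def B_def inverse_eq_divide)
  finally have "real v * q ^ k \<le> real D * (1 / (2 * real D * (s + 1)) * (1 / (real n * ln (real n))))"
    using q v by (intro mult_mono) auto
  also have "\<dots> = 1 / (2 * (s + 1)) * (1 / (real n * ln (real n)))"
    using D by simp
  also have "\<dots> \<le> 1 / (2 * (s + 1)) * (1 / 9)"
    using n s by (intro mult_left_mono divide_left_mono) auto
  finally show ?thesis
    by simp
qed

lemma finite_p_plus_nonoptimal:
  "finite {p_plus M g x | x. length x = n \<and> g x < D}"
proof -
  have "{p_plus M g x | x. length x = n \<and> g x < D} \<subseteq> p_plus M g ` {x. length x = n}"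
    by blast
  then show ?thesis
    using finite_bool_lists_length_eq by (rule finite_subset[OF _ finite_imageI])
qed

lemma p_min_le_p_plus:
  assumes "length x = n" "g x < D"
  shows "p_min M g D n \<le> p_plus M g x"
  unfolding p_min_def using assms by (intro Min_le finite_p_plus_nonoptimal) blast

lemma p_min_pos:
  assumes full: "\<And>x. length x = n \<Longrightarrow> set_pmf (M x) = {y. length y = n}"
    and opt: "length y = n" "g y = D"
    and x: "length x = n" "g x < D"
  shows "0 < p_min M g D n"
proof -
  have "0 < p_plus M g z" if "length z = n" "g z < D" for z
    unfolding p_plus_def using full that opt by (intro measure_pmf_posI[of y]) auto
  then show ?thesis
    unfolding p_min_def using x by (subst Min_gr_iff) (auto intro: finite_p_plus_nonoptimal)
qed

lemma generation_drift_bound: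
  fixes F s \<gamma> pm pp pw l :: real and D v n :: nat
  assumes F: "1 < F" and s: "0 < s" and \<gamma>: "1 < \<gamma>"
    and pm: "0 < pm" "pm \<le> pp" "pp \<le> 1" and pw: "0 \<le> pw" "pw \<le> 1 / \<gamma>" and v: "v < D"
    and n: "9 \<le> real n * ln (real n)" and "12 \<le> l"
    and l: "4 * max (log \<gamma> (2 * real D * (s + 1))) (log \<gamma> (real n * ln (real n))) \<le> l"
  shows "1 / (2 * (s + 1))
    \<le> (1 - (lam_pot F s pm (max 1 (l / F)) - lam_pot F s pm l)) * (1 - (1 - pp) ^ nof l)
       - (lam_pot F s pm (F powr (1 / s) * l) - lam_pot F s pm l) * (1 - pp) ^ nof l
       - real v * pw ^ nof l"
proof -
  define Q where "Q = (1 - pp) ^ nof l"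
  define Ls where "Ls = lam_pot F s pm (max 1 (l / F)) - lam_pot F s pm l"
  define Lf where "Lf = lam_pot F s pm (F powr (1 / s) * l) - lam_pot F s pm l"
  have "0 \<le> Q" "Q \<le> 1"
    using pm by (auto simp: Q_def power_le_one)
  moreover have "1 / (s + 1) \<le> 1 - Ls"
    using lam_pot_shrink_le[OF F s pm(1), of l] \<open>12 \<le> l\<close> s by (simp add: Ls_def field_simps)
  moreover have "Lf = - (1 / (s + 1)) \<or> (Lf \<le> 0 \<and> Q \<le> 5 / 12)"
  proof (cases "pm * l \<le> 1")
    case True
    then show ?thesis
      using lam_pot_grow_eq[OF F s pm(1)] \<open>12 \<le> l\<close> by (simp add: Lf_def)
  next
    case False
    then show ?thesis
      using lam_pot_grow_le[OF F s pm(1)] no_improvement_prob_le[OF pm] \<open>12 \<le> l\<close>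
      by (simp add: Lf_def Q_def)
  qed
  moreover have "real v * pw ^ nof l \<le> 1 / (18 * (s + 1))"
    using \<open>12 \<le> l\<close> nof_ge[of l] v pw
    by (intro fitness_loss_term_le[OF \<gamma> s _ _ _ _ n _ l]) auto
  then have "real v * pw ^ nof l \<le> 1 / (s + 1) / 18"
    by (simp add: mult.commute)
  ultimately have "1 / (s + 1) / 2 \<le> (1 - Ls) * (1 - Q) - Lf * Q - real v * pw ^ nof l"
    using s by (intro drift_bound_arith) auto
  then show ?thesis
    by (simp add: Q_def Ls_def Lf_def mult.commute)
qed

lemma ea_step_drift_ge:
  fixes F s \<gamma> l :: real and M :: "bool list \<Rightarrow> bool list pmf" and g :: "bool list \<Rightarrow> nat"
    and D n :: nat
  assumes F: "1 < F" and s: "0 < s" and \<gamma>: "1 < \<gamma>"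
    and full: "\<And>x. length x = n \<Longrightarrow> set_pmf (M x) = {y. length y = n}"
    and opt: "\<exists>y. length y = n \<and> g y = D"
    and worse: "\<forall>x. length x = n \<and> g x < D \<longrightarrow> p_minus M g x \<le> 1 / \<gamma>"
    and large: "max (\<gamma> powr 3) 9 \<le> real n * ln (real n)"
    and x: "length x = n" "g x < D"
    and l: "4 * max (log \<gamma> (2 * real D * (s + 1))) (log \<gamma> (real n * ln (real n))) \<le> l"
  shows "1 / (2 * (s + 1)) \<le> measure_pmf.expectation (ea_step F s M g (x, l))
            (\<lambda>X'. pot F s g (p_min M g D n) X' - pot F s g (p_min M g D n) (x, l))
       \<and> 1 / (2 * (s + 1)) \<le> measure_pmf.expectation (ea_step F s M g (x, l))
            (\<lambda>X'. pot_change_unit F s g (p_min M g D n) (x, l) X')"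
proof -
  define pm where "pm = p_min M g D n"
  define bound where "bound = (1 - (lam_pot F s pm (max 1 (l / F)) - lam_pot F s pm l))
      * (1 - (1 - p_plus M g x) ^ nof l)
    - (lam_pot F s pm (F powr (1 / s) * l) - lam_pot F s pm l) * (1 - p_plus M g x) ^ nof l
    - real (g x) * p_minus M g x ^ nof l"
  obtain y where y: "length y = n" "g y = D"
    using opt by blast
  have pm: "0 < pm" "pm \<le> p_plus M g x"
    using p_min_pos[OF full y x] p_min_le_p_plus[where g = g, OF x] by (auto simp: pm_def)
  have "3 \<le> log \<gamma> (real n * ln (real n))"
    using \<gamma> large by (subst le_log_iff) auto
  then have "12 \<le> l"
    using l by linarith
  then have "1 \<le> nof l"
    using nof_ge[of l] by auto
  have "1 / (2 * (s + 1)) \<le> bound"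
    unfolding bound_def using pm worse x large \<open>12 \<le> l\<close>
    by (intro generation_drift_bound[OF F s \<gamma> _ _ _ _ _ _ _ _ l]) (auto simp: p_plus_def p_minus_def)
  moreover have "bound \<le> measure_pmf.expectation (ea_step F s M g (x, l))
      (\<lambda>(y, l'). (real (g y) - real (g x)) - (lam_pot F s pm l' - lam_pot F s pm l))"
    unfolding bound_def
    by (rule ea_step_expectation_ge[OF \<open>1 \<le> nof l\<close>]) (auto simp: full x finite_bool_lists_length_eq)
  moreover have "bound \<le> measure_pmf.expectation (ea_step F s M g (x, l))
      (\<lambda>(y, l'). (if g y > g x then 1 else real (g y) - real (g x))
                 - (lam_pot F s pm l' - lam_pot F s pm l))"
    unfolding bound_def
    by (rule ea_step_expectation_ge[OF \<open>1 \<le> nof l\<close>]) (auto simp: full x finite_bool_lists_length_eq)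
  moreover have "(\<lambda>X'. pot F s g pm X' - pot F s g pm (x, l))
      = (\<lambda>(y, l'). (real (g y) - real (g x)) - (lam_pot F s pm l' - lam_pot F s pm l))"
    "(\<lambda>X'. pot_change_unit F s g pm (x, l) X')
      = (\<lambda>(y, l'). (if g y > g x then 1 else real (g y) - real (g x))
                 - (lam_pot F s pm l' - lam_pot F s pm l))"
    by (auto simp: pot_def pot_change_unit_def)
  ultimately show ?thesis
    unfolding pm_def by auto
qed

theorem lemma3p6:
  fixes F s \<gamma> :: real
    and mut :: "nat \<Rightarrow> bool list \<Rightarrow> bool list pmf"
    and f :: "nat \<Rightarrow> bool list \<Rightarrow> nat"
    and d :: "nat \<Rightarrow> nat"
  assumes F: "F > 1" and s: "s > 0"
    and mutation:
      "(\<exists>p :: nat \<Rightarrow> real. (\<forall>n. 0 \<le> p n \<and> p n \<le> 1)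
          \<and> p \<in> O(\<lambda>n. 1 / real n)
          \<and> (\<exists>C. \<forall>\<^sub>F n in sequentially. p n \<ge> real n powr (- C))
          \<and> mut = (\<lambda>n. sbm (p n)))
       \<or> (\<exists>\<beta> > 1. mut = (\<lambda>n. heavy_tailed \<beta>))"
    and range_f: "\<And>n x. length x = n \<Longrightarrow> f n x \<le> d n"
    and optimum: "\<And>n. \<exists>x. length x = n \<and> f n x = d n"
    and everywhere_hard: "\<exists>\<epsilon> C. 0 < \<epsilon> \<and> \<epsilon> < 1 \<and>
          (\<forall>\<^sub>F n in sequentially. \<forall>x. length x = n \<and> f n x < d n \<longrightarrow>
              p_plus (mut n) (f n) x \<le> C * real n powr (- \<epsilon>))"
    and few_values: "(\<lambda>n. ln (real (d n) + 1)) \<in> o(\<lambda>n. (ln (real n))^2)"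
    and gamma: "\<gamma> > 1"
    and gamma_bound: "\<forall>\<^sub>F n in sequentially. \<forall>x. length x = n \<and> f n x < d n \<longrightarrow>
              p_minus (mut n) (f n) x \<le> 1 / \<gamma>"
  shows "\<forall>\<^sub>F n in sequentially. \<forall>x l.
      length x = n \<longrightarrow> f n x < d n \<longrightarrow>
      l \<ge> 4 * max (log \<gamma> (2 * real (d n) * (s + 1))) (log \<gamma> (real n * ln (real n))) \<longrightarrow>
        measure_pmf.expectation (ea_step F s (mut n) (f n) (x, l))
            (\<lambda>X'. pot F s (f n) (p_min (mut n) (f n) (d n) n) X'
                   - pot F s (f n) (p_min (mut n) (f n) (d n) n) (x, l)) \<ge> 1 / (2 * (s + 1))
      \<and> measure_pmf.expectation (ea_step F s (mut n) (f n) (x, l))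
            (\<lambda>X'. pot_change_unit F s (f n) (p_min (mut n) (f n) (d n) n) (x, l) X')
          \<ge> 1 / (2 * (s + 1))"
proof -
  have "\<forall>\<^sub>F n in sequentially. \<forall>x. length x = n \<longrightarrow> set_pmf (mut n x) = {y. length y = n}"
    using mutation
  proof (elim disjE exE conjE)
    fix p :: "nat \<Rightarrow> real" and C
    assume "p \<in> O(\<lambda>n. 1 / real n)" "\<forall>\<^sub>F n in sequentially. p n \<ge> real n powr (- C)"
      and "mut = (\<lambda>n. sbm (p n))"
    then show ?thesis
      using eventually_in_open_unit_interval[of p C] by (auto elim: eventually_mono simp: set_pmf_sbm)
  next
    fix \<beta> :: real
    assume mut: "mut = (\<lambda>n. heavy_tailed \<beta>)"
    from eventually_ge_at_top[of 2] show ?thesis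
      by eventually_elim (simp add: mut set_pmf_heavy_tailed)
  qed
  moreover have "\<forall>\<^sub>F n in sequentially. max (\<gamma> powr 3) 9 \<le> real n * ln (real n)"
    by real_asymp
  ultimately show ?thesis
    using gamma_bound
    by eventually_elim (intro allI impI ea_step_drift_ge[OF F s gamma]; use optimum in auto)
qed

end
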